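(* For every integer $n\ge 0$, \[ \sum_{k=0}^{n}(-4)^k\frac{\binom{n}{k}}{\binom{1+2k}{k}}\,k\,H_{1+2k} =\frac{2n\{H_{n}-2H_{1+2n}\}}{(4n^2-1)(2n-3)}+\frac{2n(8n^4+20n^3-2n^2-53n+8)}{(4n^2-1)^2(2n-3)^2}. \]
   Context: For an integer $m\ge 0$, $H_m$ denotes the $m$-th harmonic number: $H_0=0$ and $H_m=\sum_{j=1}^m \frac1j$ for $m\ge1$. $\binom{n}{k}$ is the usual binomial coefficient. *)

theory Defs
  imports "HOL-Analysis.Analysis"
begin

end

theory Submission
  imports Defs
begin

text \<open>
  Creative telescoping. For the summand \<open>t(n,k)\<close> there is a certificate \<open>G(n,k)\<close>, namely the
  weight \<open>(-4)^k C(n+1,k) / C(2k+1,k)\<close> times (a polynomial in \<open>k\<close> times \<open>H_{2k+1}\<close> plus a rational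
  function of \<open>n\<close> and \<open>k\<close>), such that
  \<open>n(2n+3) t(n+1,k) - (n+1)(2n-3) t(n,k) = G(n,k+1) - G(n,k)\<close>;
  via the hypergeometric ratios of the weight this is a rational identity.
  Summing over \<open>k\<close> telescopes to a first-order inhomogeneous recurrence for the sum, which the
  closed form satisfies as well. Its leading coefficient \<open>n(2n+3)\<close> vanishes only at \<open>n = 0\<close>, so
  agreement at \<open>n = 1\<close> propagates to all \<open>n \<ge> 1\<close>.
\<close>

lemma of_nat_binomial_Suc_right:
  "(of_nat (m choose Suc k) :: 'a::comm_ring_1) * (of_nat k + 1) = of_nat (m choose k) * (of_nat m - of_nat k)"
proof (cases "k \<le> m")
  case True
  have "(m choose Suc k) * Suc k = (m - k) * (m choose k)"
    using binomial_absorb_comp[of m k] binomial_absorption[of k m] by (simp add: mult.commute)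
  then have "(of_nat ((m choose Suc k) * Suc k) :: 'a) = of_nat ((m - k) * (m choose k))" by (simp only:)
  then show ?thesis using True by (simp add: algebra_simps)
qed (simp add: binomial_eq_0)

lemma of_nat_binomial_Suc_left:
  "(of_nat (Suc n choose k) :: 'a::comm_ring_1) * (of_nat n + 1 - of_nat k) = of_nat (n choose k) * (of_nat n + 1)"
proof (cases "k \<le> Suc n")
  case True
  have "(Suc n - k) * (Suc n choose k) = (n choose k) * Suc n"
    by (metis binomial_absorb_comp diff_Suc_1 mult.commute)
  then have "(of_nat ((Suc n - k) * (Suc n choose k)) :: 'a) = of_nat ((n choose k) * Suc n)" by (simp only:)
  then show ?thesis unfolding of_nat_mult of_nat_diff[OF True] by (simp add: algebra_simps)
qed (simp add: binomial_eq_0)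

lemma binomial_odd_Suc: "(2*k + 3 choose Suc k) * (k + 2) = 2 * (2*k + 3) * (2*k + 1 choose k)"
proof -
  have "(2*k + 3 choose Suc k) * (k + 2) = (2*k + 3) * (2*k + 2 choose Suc k)"
    using binomial_absorb_comp[of "2*k + 3" "Suc k"] by (simp add: mult.commute)
  moreover have "2*k + 2 choose Suc k = 2 * (2*k + 1 choose k)"
    using binomial_Suc_Suc[of "2*k + 1" k] binomial_symmetric[of "Suc k" "2*k + 1"] by simp
  ultimately show ?thesis by (simp only: ac_simps)
qed

lemma of_nat_binomial_odd_Suc:
  "(of_nat ((1 + 2 * Suc k) choose Suc k) :: 'a::comm_ring_1) * (of_nat k + 2)
     = 2 * (2 * of_nat k + 3) * of_nat ((1 + 2 * k) choose k)"
proof -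
  have "1 + 2 * Suc k = 2*k + 3" "1 + 2 * k = 2*k + 1" by simp_all
  then have "(of_nat (((1 + 2 * Suc k) choose Suc k) * (k + 2)) :: 'a)
      = of_nat (2 * (2 * k + 3) * ((1 + 2 * k) choose k))"
    using binomial_odd_Suc[of k] by (simp only:)
  then show ?thesis by (simp only: of_nat_mult of_nat_add of_nat_numeral)
qed

lemma harm_odd_Suc:
  "harm (1 + 2 * Suc k) = (harm (1 + 2 * k) :: real) + 1 / (2 * real k + 2) + 1 / (2 * real k + 3)"
proof -
  have "1 + 2 * Suc k = Suc (Suc (1 + 2 * k))" by simp
  then show ?thesis by (simp add: harm_Suc field_simps)
qed

lemma double_of_nat_neq_odd:
  assumes "odd m"
  shows "2 * (of_nat n :: 'a::semiring_char_0) \<noteq> of_nat m"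
proof
  assume "2 * (of_nat n :: 'a) = of_nat m"
  then have "2 * n = m" by (metis of_nat_eq_iff of_nat_mult of_nat_numeral)
  with assms show False by auto
qed

lemma first_order_recurrence_unique:
  fixes f g :: "nat \<Rightarrow> 'a::idom"
  assumes "\<And>n. n \<ge> m \<Longrightarrow> a n \<noteq> 0"
    and "\<And>n. n \<ge> m \<Longrightarrow> a n * f (Suc n) - b n * f n = a n * g (Suc n) - b n * g n"
    and "f m = g m" and "n \<ge> m"
  shows "f n = g n"
  using \<open>n \<ge> m\<close>
proof (induction n rule: dec_induct)
  case (step n)
  with assms(2)[of n] have "a n * f (Suc n) = a n * g (Suc n)" by simp
  with assms(1)[OF step(1)] show ?case by simp
qed (fact assms(3))

definition weight :: "nat \<Rightarrow> nat \<Rightarrow> real" where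
  "weight n k = (-4::real)^k * (real (n choose k) / real ((1 + 2*k) choose k))"

lemma weight_Suc_right:
  "weight m (Suc k) * ((real k + 1) * (2 * real k + 3)) = -2 * (real m - real k) * (real k + 2) * weight m k"
proof -
  have "-4 * z * (C' / B') * ((real k + 1) * (2 * real k + 3))
      = -2 * (real m - real k) * (real k + 2) * (z * (C / B))"
    if "C' * (real k + 1) = C * (real m - real k)" "B' * (real k + 2) = 2 * (2 * real k + 3) * B"
      "B \<noteq> 0" "B' \<noteq> 0" for z C C' B B' :: real
  proof -
    have "B * inverse B = 1" "B' * inverse B' = 1" "(real k + 2) * inverse (real k + 2) = 1"
      using that(3,4) by simp_all
    with that(1,2) show ?thesis unfolding divide_inverse by algebra
  qed
  from this[OF of_nat_binomial_Suc_right of_nat_binomial_odd_Suc] show ?thesis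
    unfolding weight_def power_Suc by (simp add: binomial_eq_0_iff del: binomial_Suc_Suc)
qed

lemma weight_Suc_left: "weight n k * (real n + 1) = weight (Suc n) k * (real n + 1 - real k)"
  unfolding weight_def using of_nat_binomial_Suc_left[of n k, where 'a=real, symmetric]
  by (simp add: divide_inverse)

lemma weight_eq_0: "n < k \<Longrightarrow> weight n k = 0"
  by (simp add: weight_def binomial_eq_0)

definition summand :: "nat \<Rightarrow> nat \<Rightarrow> real" where
  "summand n k = weight n k * real k * harm (1 + 2*k)"

definition certificate_poly :: "real \<Rightarrow> real \<Rightarrow> real" where
  "certificate_poly x y = (54*x + 62*x^2 - 8*x^4) + (-24 - 22*x + 48*x^2 - 24*x^3 - 32*x^4)*y
     + (-21 - 215*x - 158*x^2 - 4*x^3 + 8*x^4)*y^2 + (33 + 94*x + 84*x^2 + 72*x^3 + 32*x^4)*y^3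
     + (12 + 8*x - 48*x^2 - 32*x^3)*y^4"

definition certificate :: "nat \<Rightarrow> nat \<Rightarrow> real" where
  "certificate n k = weight (Suc n) k *
     (real k * (2 * real k + 1) * (1 - real k) * harm (1 + 2*k)
      + certificate_poly (real n) (real k)
        / ((real k + 1) * ((2 * real n + 3) * (4 * (real n)^2 - 1) * (2 * real n - 3))))"

text \<open>The right-hand side is stated in the shape that \<open>certificate n (Suc k) - certificate n k\<close>
  takes after \<open>weight_Suc_right\<close>, \<open>harm_odd_Suc\<close> and \<open>real (Suc k) = y + 1\<close>.\<close>

lemma certificate_rational_identity:
  fixes x y h w :: real
  assumes "x \<ge> 0" "y \<ge> 0" "2 * x - 1 \<noteq> 0" "2 * x - 3 \<noteq> 0"
  defines "D \<equiv> (2 * x + 3) * (4 * x^2 - 1) * (2 * x - 3)"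
  shows "x * (2 * x + 3) * (w * y * h) - (2 * x - 3) * (w * (x + 1 - y) * y * h)
    = w * (-2 * (x + 1 - y) * (y + 2) / ((y + 1) * (2 * y + 3)))
        * ((y + 1) * (2 * (y + 1) + 1) * (1 - (y + 1)) * (h + 1 / (2 * y + 2) + 1 / (2 * y + 3))
           + certificate_poly x (y + 1) / ((y + 1 + 1) * D))
      - w * (y * (2 * y + 1) * (1 - y) * h + certificate_poly x y / ((y + 1) * D))"
proof -
  have "4 * x^2 - 1 = (2 * x - 1) * (2 * x + 1)"
    by (simp add: algebra_simps power2_eq_square)
  with assms(1,3,4) have "D \<noteq> 0"
    unfolding D_def by auto
  then have "(y + 1) * inverse (y + 1) = 1" "(2 * y + 3) * inverse (2 * y + 3) = 1"
    "(y + 1 + 1) * inverse (y + 1 + 1) = 1" "(2 * y + 2) * inverse (2 * y + 2) = 1" "D * inverse D = 1"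
    using assms(2) by auto
  then show ?thesis
    unfolding divide_inverse inverse_mult_distrib certificate_poly_def D_def by algebra
qed

lemma summand_telescoping:
  "real n * (2 * real n + 3) * summand (Suc n) k - (real n + 1) * (2 * real n - 3) * summand n k
     = certificate n (Suc k) - certificate n k"
proof -
  define w where "w = weight (Suc n) k"
  have real_Suc: "real (Suc k) = real k + 1" by simp
  have weight_Suc: "weight (Suc n) (Suc k)
      = w * (-2 * (real n + 1 - real k) * (real k + 2) / ((real k + 1) * (2 * real k + 3)))"
    using weight_Suc_right[of "Suc n" k] unfolding w_def by (simp add: eq_divide_eq ac_simps)
  have "(real n + 1) * summand n k = weight n k * (real n + 1) * real k * harm (1 + 2*k)"
    unfolding summand_def by (simp only: ac_simps)
  also have "\<dots> = w * (real n + 1 - real k) * real k * harm (1 + 2*k)"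
    unfolding weight_Suc_left w_def ..
  finally have summand_n:
    "(real n + 1) * summand n k = w * (real n + 1 - real k) * real k * harm (1 + 2*k)" .
  have "real n * (2 * real n + 3) * summand (Suc n) k - (real n + 1) * (2 * real n - 3) * summand n k
      = real n * (2 * real n + 3) * summand (Suc n) k - (2 * real n - 3) * ((real n + 1) * summand n k)"
    by (simp only: mult_ac)
  also have "\<dots> = real n * (2 * real n + 3) * (w * real k * harm (1 + 2*k))
        - (2 * real n - 3) * (w * (real n + 1 - real k) * real k * harm (1 + 2*k))"
    unfolding summand_n unfolding summand_def w_def ..
  also have "\<dots> = certificate n (Suc k) - certificate n k"
    unfolding certificate_def weight_Suc w_def[symmetric] harm_odd_Suc real_Suc
    by (rule certificate_rational_identity)
      (use double_of_nat_neq_odd[of 1 n] double_of_nat_neq_odd[of 3 n] in simp_all)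
  finally show ?thesis .
qed

lemma sum_summand_recurrence:
  "real n * (2 * real n + 3) * (\<Sum>k=0..Suc n. summand (Suc n) k)
     - (real n + 1) * (2 * real n - 3) * (\<Sum>k=0..n. summand n k) = - certificate n 0"
proof -
  have "(\<Sum>k=0..n. summand n k) = (\<Sum>k=0..Suc n. summand n k)"
    by (simp add: summand_def weight_eq_0)
  then have "real n * (2 * real n + 3) * (\<Sum>k=0..Suc n. summand (Suc n) k)
      - (real n + 1) * (2 * real n - 3) * (\<Sum>k=0..n. summand n k)
      = (\<Sum>k=0..Suc n. certificate n (Suc k) - certificate n k)"
    by (simp only: sum_distrib_left sum_subtractf[symmetric] summand_telescoping)
  also have "\<dots> = certificate n (Suc (Suc n)) - certificate n 0"
    by (rule sum_Suc_diff) simp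
  also have "certificate n (Suc (Suc n)) = 0"
    by (simp add: certificate_def weight_eq_0)
  finally show ?thesis by simp
qed

definition closed_form :: "nat \<Rightarrow> real" where
  "closed_form n = 2 * real n * (harm n - 2 * harm (1 + 2*n)) / ((4 * (real n)^2 - 1) * (2 * real n - 3))
      + 2 * real n * (8 * (real n)^4 + 20 * (real n)^3 - 2 * (real n)^2 - 53 * real n + 8)
        / ((4 * (real n)^2 - 1)^2 * (2 * real n - 3)^2)"

lemma closed_form_recurrence:
  "real n * (2 * real n + 3) * closed_form (Suc n) - (real n + 1) * (2 * real n - 3) * closed_form n
     = - certificate n 0"
proof -
  define x where "x = real n"
  have shift: "real (Suc n) = x + 1" "harm (Suc n) = harm n + 1 / (x + 1)"
    unfolding x_def by (simp_all add: harm_Suc divide_inverse add.commute)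
  have cert0: "certificate n 0 = (54*x + 62*x^2 - 8*x^4) / ((2 * x + 3) * (4 * x^2 - 1) * (2 * x - 3))"
    unfolding x_def by (simp add: certificate_def weight_def certificate_poly_def)
  have factor: "4 * (x + 1)^2 - 1 = (2*x+1) * (2*x+3)" "2 * (x + 1) - 3 = 2*x - 1"
    "4 * x^2 - 1 = (2*x+1) * (2*x-1)"
    by (simp_all add: algebra_simps power2_eq_square)
  have "2 * x - 1 \<noteq> 0" "2 * x - 3 \<noteq> 0"
    using double_of_nat_neq_odd[of 1 n] double_of_nat_neq_odd[of 3 n] unfolding x_def by simp_all
  moreover have "2 * x + 1 \<noteq> 0" "2 * x + 3 \<noteq> 0" "x + 1 \<noteq> 0" "2 * x + 2 \<noteq> 0"
    unfolding x_def by linarith+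
  ultimately have "(2*x+1) * inverse (2*x+1) = 1" "(2*x-1) * inverse (2*x-1) = 1"
    "(2*x+3) * inverse (2*x+3) = 1" "(2*x-3) * inverse (2*x-3) = 1" "(x+1) * inverse (x+1) = 1" "(2*x+2) * inverse (2*x+2) = 1"
    by simp_all
  then show ?thesis
    unfolding closed_form_def cert0 harm_odd_Suc x_def[symmetric] shift
      factor divide_inverse inverse_mult_distrib power_inverse[symmetric]
    by algebra
qed

theorem theorem5:
  fixes n :: nat
  shows "(\<Sum>k=0..n. (-4::real)^k * (real (n choose k) / real ((1 + 2*k) choose k)) * real k * harm (1 + 2*k))
    = 2 * real n * (harm n - 2 * harm (1 + 2*n)) / ((4 * (real n)^2 - 1) * (2 * real n - 3))
      + 2 * real n * (8 * (real n)^4 + 20 * (real n)^3 - 2 * (real n)^2 - 53 * real n + 8)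
        / ((4 * (real n)^2 - 1)^2 * (2 * real n - 3)^2)"
proof (cases "n = 0")
  case False
  have "(\<Sum>k=0..n. summand n k) = closed_form n"
  proof (rule first_order_recurrence_unique[where m = 1])
    show "(\<Sum>k=0..1. summand 1 k) = closed_form 1"
      by (simp add: summand_def weight_def closed_form_def harm_expand harm_Suc)
    show "real i * (2 * real i + 3) * (\<Sum>k=0..Suc i. summand (Suc i) k)
          - (real i + 1) * (2 * real i - 3) * (\<Sum>k=0..i. summand i k)
        = real i * (2 * real i + 3) * closed_form (Suc i) - (real i + 1) * (2 * real i - 3) * closed_form i" for i
      unfolding sum_summand_recurrence closed_form_recurrence ..
  qed (use False in auto)
  then show ?thesis unfolding summand_def weight_def closed_form_def .
qed simp

end
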